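(* For all commands $c_1,c_1',c_2$ and stores $\sigma,\sigma'$ of the While-language: if $(c_1,\sigma)\to^*(c_1',\sigma')$ and $(c_1;c_2,\sigma)\to^\infty$, then $(c_1';c_2,\sigma')\to^\infty$.
   Context: While-language syntax: variables $x$ range over a countably infinite set $\mathit{Var}$; $n$ ranges over natural numbers; values are $v ::= \mathsf{null}\mid n$ ($\mathsf{null}$ distinct from every natural number); expressions are $e ::= v\mid x\mid e_1\oplus e_2$ with $\oplus\in\{+,-,*\}$, where $\oplus(n_1,n_2)$ is the result of the operation on naturals; commands are $c ::= \mathsf{skip}\mid\mathsf{alloc}\ x\mid x:=e\mid c_1;c_2\mid \mathsf{if}\ e\ c_1\ c_2\mid\mathsf{while}\ e\ c$. A store $\sigma$ is a finite partial map from $\mathit{Var}$ to values, with domain $\mathrm{dom}(\sigma)$, lookup $\sigma(x)$, update $\sigma[x\mapsto v]$. Expression evaluation $(e,\sigma)\Rightarrow_E v$ is the least relation with: $(v,\sigma)\Rightarrow_E v$; $(x,\sigma)\Rightarrow_E\sigma(x)$ if $x\in\mathrm{dom}(\sigma)$; if $(e_1,\sigma)\Rightarrow_E n_1$ and $(e_2,\sigma)\Rightarrow_E n_2$ with $n_1,n_2$ naturals then $(e_1\oplus e_2,\sigma)\Rightarrow_E\oplus(n_1,n_2)$. Small-step relation $(c,\sigma)\to(c',\sigma')$ is the least relation with: $(\mathsf{alloc}\ x,\sigma)\to(\mathsf{skip},\sigma[x\mapsto\mathsf{null}])$ if $x\notin\mathrm{dom}(\sigma)$; $(x:=e,\sigma)\to(\mathsf{skip},\sigma[x\mapsto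 v])$ if $x\in\mathrm{dom}(\sigma)$ and $(e,\sigma)\Rightarrow_E v$; $(c_1;c_2,\sigma)\to(c_1';c_2,\sigma')$ if $(c_1,\sigma)\to(c_1',\sigma')$; $(\mathsf{skip};c_2,\sigma)\to(c_2,\sigma)$; $(\mathsf{if}\ e\ c_1\ c_2,\sigma)\to(c_1,\sigma)$ if $(e,\sigma)\Rightarrow_E v$, $v\neq 0$; $(\mathsf{if}\ e\ c_1\ c_2,\sigma)\to(c_2,\sigma)$ if $(e,\sigma)\Rightarrow_E 0$; $(\mathsf{while}\ e\ c,\sigma)\to(c;\mathsf{while}\ e\ c,\sigma)$ if $(e,\sigma)\Rightarrow_E v$, $v\neq0$; $(\mathsf{while}\ e\ c,\sigma)\to(\mathsf{skip},\sigma)$ if $(e,\sigma)\Rightarrow_E 0$. $\to^*$ is its reflexive-transitive closure. The predicate $(c,\sigma)\to^\infty$ is coinductively defined (greatest predicate) by: if $(c,\sigma)\to(c',\sigma')$ and $(c',\sigma')\to^\infty$ then $(c,\sigma)\to^\infty$; i.e. it holds exactly when there is an infinite sequence of transitions from $(c,\sigma)$. *)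

theory Defs
  imports Main
begin

type_synonym var = string

datatype val = Null | N nat

datatype binop = Plus | Minus | Times

fun apply_op :: "binop \<Rightarrow> nat \<Rightarrow> nat \<Rightarrow> nat" where
  "apply_op Plus a b = a + b"
| "apply_op Minus a b = a - b"
| "apply_op Times a b = a * b"

datatype expr = V val | Var var | BinOp binop expr expr

datatype com = Skip | Alloc var | Assign var expr | Seq com com
  | If expr com com | While expr com

(* stores: finite partial maps; finiteness of the domain is imposed as a hypothesis *)
type_synonym store = "var \<Rightarrow> val option"

inductive eval :: "expr \<Rightarrow> store \<Rightarrow> val \<Rightarrow> bool" where
  eval_val: "eval (V v) \<sigma> v"
| eval_var: "\<sigma> x = Some v \<Longrightarrow> eval (Var x) \<sigma> v"
| eval_op: "eval e1 \<sigma> (N n1) \<Longrightarrow> eval e2 \<sigma> (N n2) \<Longrightarrow>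
            eval (BinOp op e1 e2) \<sigma> (N (apply_op op n1 n2))"

inductive step :: "com \<times> store \<Rightarrow> com \<times> store \<Rightarrow> bool" where
  step_alloc: "\<sigma> x = None \<Longrightarrow> step (Alloc x, \<sigma>) (Skip, \<sigma>(x \<mapsto> Null))"
| step_assign: "x \<in> dom \<sigma> \<Longrightarrow> eval e \<sigma> v \<Longrightarrow> step (Assign x e, \<sigma>) (Skip, \<sigma>(x \<mapsto> v))"
| step_seq: "step (c1, \<sigma>) (c1', \<sigma>') \<Longrightarrow> step (Seq c1 c2, \<sigma>) (Seq c1' c2, \<sigma>')"
| step_seq_skip: "step (Seq Skip c2, \<sigma>) (c2, \<sigma>)"
| step_if_true: "eval e \<sigma> v \<Longrightarrow> v \<noteq> N 0 \<Longrightarrow> step (If e c1 c2, \<sigma>) (c1, \<sigma>)"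
| step_if_false: "eval e \<sigma> (N 0) \<Longrightarrow> step (If e c1 c2, \<sigma>) (c2, \<sigma>)"
| step_while_true: "eval e \<sigma> v \<Longrightarrow> v \<noteq> N 0 \<Longrightarrow> step (While e c, \<sigma>) (Seq c (While e c), \<sigma>)"
| step_while_false: "eval e \<sigma> (N 0) \<Longrightarrow> step (While e c, \<sigma>) (Skip, \<sigma>)"

abbreviation steps :: "com \<times> store \<Rightarrow> com \<times> store \<Rightarrow> bool" where
  "steps \<equiv> step\<^sup>*\<^sup>*"

coinductive diverges :: "com \<times> store \<Rightarrow> bool" where
  "step cs cs' \<Longrightarrow> diverges cs' \<Longrightarrow> diverges cs"

end

theory Submission
  imports Defs
begin

text \<open>The small-step semantics is deterministic, so a diverging configuration has only one
  infinite run and every reachable configuration lies on it; evaluating c1 inside the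
  sequence c1; c2 reaches c1'; c2.\<close>

lemma eval_deterministic: "eval e \<sigma> v \<Longrightarrow> eval e \<sigma> v' \<Longrightarrow> v = v'"
proof (induction arbitrary: v' rule: eval.induct)
  case (eval_op e1 \<sigma> n1 e2 n2 op)
  from eval_op.prems show ?case
    by (cases rule: eval.cases) (auto dest: eval_op.IH)
qed (auto elim: eval.cases)

lemma Skip_final: "\<not> step (Skip, \<sigma>) cs"
  by (auto elim: step.cases)

lemma step_deterministic: "step cs cs' \<Longrightarrow> step cs cs'' \<Longrightarrow> cs' = cs''"
proof (induction arbitrary: cs'' rule: step.induct)
  case (step_seq c1 \<sigma> c1' \<sigma>' c2)
  from step_seq.prems show ?case
    by (cases rule: step.cases) (use step_seq.IH step_seq.hyps Skip_final in auto)
qed (auto elim!: step.cases simp: Skip_final dest: eval_deterministic)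

lemma steps_Seq: "steps (c1, \<sigma>) (c1', \<sigma>') \<Longrightarrow> steps (Seq c1 c2, \<sigma>) (Seq c1' c2, \<sigma>')"
proof (induction rule: rtranclp_induct2)
  case (step c \<tau> c' \<tau>')
  then show ?case by (meson rtranclp.rtrancl_into_rtrancl step.step_seq)
qed simp

lemma diverges_step: "diverges cs \<Longrightarrow> step cs cs' \<Longrightarrow> diverges cs'"
  by (metis diverges.cases step_deterministic)

lemma diverges_steps: "steps cs cs' \<Longrightarrow> diverges cs \<Longrightarrow> diverges cs'"
  by (induction rule: rtranclp_induct) (auto intro: diverges_step)

theorem lemma7:
  fixes c1 c1' c2 :: com and \<sigma> \<sigma>' :: store
  assumes "finite (dom \<sigma>)" and "finite (dom \<sigma>')"
    and "steps (c1, \<sigma>) (c1', \<sigma>')"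
    and "diverges (Seq c1 c2, \<sigma>)"
  shows "diverges (Seq c1' c2, \<sigma>')"
  using diverges_steps[OF steps_Seq[OF assms(3)] assms(4)] .

end
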